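(* Let $n\ge1$, and for $j=1,\dots,n$ let $\hat\phi_j\in\mathbb{R}$, $\tilde\phi_j\ge 0$ and $0\le\underline{\xi}_j\le\overline{\xi}_j$. For $\mathbf{x}\in\mathbb{R}^n$, $\mathbf{x}\succeq\mathbf{0}$, define the worst-case squared position error bound $$\mathcal{P}_{\mathrm R}(\mathbf{x})=\max_{\substack{\phi_j\in[\hat\phi_j-\tilde\phi_j,\,\hat\phi_j+\tilde\phi_j]\\ \xi_j\in[\underline\xi_j,\,\overline\xi_j]}}\operatorname{tr}\Big\{\Big(\sum_{j=1}^n x_j\xi_j\mathbf{u}(\phi_j)\mathbf{u}(\phi_j)^{\mathsf T}\Big)^{-1}\Big\}$$ (the trace being $+\infty$ when the matrix is singular), let $\underline{\mathbf{R}}=\operatorname{diag}\{\underline\xi_1,\dots,\underline\xi_n\}$ and $B(\mathbf{x})=\tfrac14\,\mathcal{P}_{\mathrm R}(\mathbf{x})\cdot\mathbf{1}^{\mathsf T}\underline{\mathbf{R}}\mathbf{x}$. For a positive integer $M$, let $\vartheta_m=(2m+1)\pi/M$ for $m\in\mathcal{M}=\{0,1,\dots,M-1\}$, and let $\mathbf{h}_m,\mathbf{g}_m\in\mathbb{R}^n$ have $j$th entries $$[\mathbf{h}_m]_j=\max_{|\epsilon|\le2\tilde\phi_j}\cos(2\hat\phi_j-\vartheta_m+\epsilon),\qquad [\mathbf{g}_m]_j=\frac{[\mathbf{h}_m]_j}{\cos(\pi/M)}.$$ Define $$\underline{\mathcal{P}}_M(\mathbf{x})=\max_{m\in\mathcal{M}}\frac{4\cdot\mathbf{1}^{\mathsf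 T}\underline{\mathbf{R}}\mathbf{x}}{(\mathbf{1}^{\mathsf T}\underline{\mathbf{R}}\mathbf{x})^2-(\mathbf{h}_m^{\mathsf T}\underline{\mathbf{R}}\mathbf{x})^2},\qquad \overline{\mathcal{P}}_M(\mathbf{x})=\max_{m\in\mathcal{M}}\frac{4\cdot\mathbf{1}^{\mathsf T}\underline{\mathbf{R}}\mathbf{x}}{(\mathbf{1}^{\mathsf T}\underline{\mathbf{R}}\mathbf{x})^2-(\mathbf{g}_m^{\mathsf T}\underline{\mathbf{R}}\mathbf{x})^2}.$$ Then for any $\mathbf{x}\succeq\mathbf{0}$ with $\mathcal{P}_{\mathrm R}(\mathbf{x})<\infty$ and any $M\ge\pi\sqrt{B(\mathbf{x})}$, we have $\underline{\mathcal{P}}_M(\mathbf{x})\le\mathcal{P}_{\mathrm R}(\mathbf{x})\le\overline{\mathcal{P}}_M(\mathbf{x})$.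
   Context: $\mathbf{u}(\phi)=[\cos\phi\ \ \sin\phi]^{\mathsf T}$; $\mathbf{1}$ is the all-ones vector; $\mathbf{x}\succeq\mathbf{0}$ means entrywise nonnegative. This models one agent (with one uncertainty cell) in a wireless localization network with $n$ anchors: $\phi_j$ is the agent–anchor angle known to lie in $[\hat\phi_j-\tilde\phi_j,\hat\phi_j+\tilde\phi_j]$, $\xi_j$ the equivalent ranging coefficient known to lie in $[\underline\xi_j,\overline\xi_j]$, and $\mathbf{x}$ the anchor transmit power vector. *)

theory Defs
  imports "HOL-Analysis.Analysis"
begin

definition uvec :: "real \<Rightarrow> real^2" where
  "uvec \<phi> = (\<chi> i. if i = 1 then cos \<phi> else sin \<phi>)"

definition uuT :: "real \<Rightarrow> real^2^2" where
  "uuT \<phi> = (\<chi> i k. uvec \<phi> $ i * uvec \<phi> $ k)"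

definition EFIM :: "nat \<Rightarrow> (nat \<Rightarrow> real) \<Rightarrow> (nat \<Rightarrow> real) \<Rightarrow> (nat \<Rightarrow> real) \<Rightarrow> real^2^2" where
  "EFIM n x \<xi> \<phi> = (\<Sum>j<n. (x j * \<xi> j) *\<^sub>R uuT (\<phi> j))"

definition trinv :: "real^2^2 \<Rightarrow> ereal" where
  "trinv J = (if invertible J then ereal (trace (matrix_inv J)) else \<infinity>)"

definition PR :: "nat \<Rightarrow> (nat \<Rightarrow> real) \<Rightarrow> (nat \<Rightarrow> real) \<Rightarrow> (nat \<Rightarrow> real) \<Rightarrow> (nat \<Rightarrow> real)
    \<Rightarrow> (nat \<Rightarrow> real) \<Rightarrow> ereal" where
  "PR n \<phi>hat \<phi>tl \<xi>lo \<xi>hi x =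
     (SUP (\<phi>, \<xi>) \<in> {(\<phi>, \<xi>). \<forall>j<n. \<phi> j \<in> {\<phi>hat j - \<phi>tl j .. \<phi>hat j + \<phi>tl j}
                              \<and> \<xi> j \<in> {\<xi>lo j .. \<xi>hi j}}.
        trinv (EFIM n x \<xi> \<phi>))"

text \<open>1^T R x with R = diag(xi_lower), and v^T R x.\<close>
definition wsum :: "nat \<Rightarrow> (nat \<Rightarrow> real) \<Rightarrow> (nat \<Rightarrow> real) \<Rightarrow> (nat \<Rightarrow> real) \<Rightarrow> real" where
  "wsum n v \<xi>lo x = (\<Sum>j<n. v j * \<xi>lo j * x j)"

definition Bfun :: "nat \<Rightarrow> (nat \<Rightarrow> real) \<Rightarrow> (nat \<Rightarrow> real) \<Rightarrow> (nat \<Rightarrow> real) \<Rightarrow> (nat \<Rightarrow> real)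
    \<Rightarrow> (nat \<Rightarrow> real) \<Rightarrow> real" where
  "Bfun n \<phi>hat \<phi>tl \<xi>lo \<xi>hi x =
     1/4 * real_of_ereal (PR n \<phi>hat \<phi>tl \<xi>lo \<xi>hi x) * wsum n (\<lambda>_. 1) \<xi>lo x"

definition vartheta :: "nat \<Rightarrow> nat \<Rightarrow> real" where
  "vartheta M m = (2 * real m + 1) * pi / real M"

definition hvec :: "(nat \<Rightarrow> real) \<Rightarrow> (nat \<Rightarrow> real) \<Rightarrow> nat \<Rightarrow> nat \<Rightarrow> nat \<Rightarrow> real" where
  "hvec \<phi>hat \<phi>tl M m j =
     Sup ((\<lambda>\<epsilon>. cos (2 * \<phi>hat j - vartheta M m + \<epsilon>)) ` {-2 * \<phi>tl j .. 2 * \<phi>tl j})"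

definition gvec :: "(nat \<Rightarrow> real) \<Rightarrow> (nat \<Rightarrow> real) \<Rightarrow> nat \<Rightarrow> nat \<Rightarrow> nat \<Rightarrow> real" where
  "gvec \<phi>hat \<phi>tl M m j = hvec \<phi>hat \<phi>tl M m j / cos (pi / real M)"

definition PlowM :: "nat \<Rightarrow> (nat \<Rightarrow> real) \<Rightarrow> (nat \<Rightarrow> real) \<Rightarrow> (nat \<Rightarrow> real) \<Rightarrow> nat
    \<Rightarrow> (nat \<Rightarrow> real) \<Rightarrow> real" where
  "PlowM n \<phi>hat \<phi>tl \<xi>lo M x =
     (MAX m \<in> {..<M}. 4 * wsum n (\<lambda>_. 1) \<xi>lo x /
        ((wsum n (\<lambda>_. 1) \<xi>lo x)\<^sup>2 - (wsum n (hvec \<phi>hat \<phi>tl M m) \<xi>lo x)\<^sup>2))"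

definition PupM :: "nat \<Rightarrow> (nat \<Rightarrow> real) \<Rightarrow> (nat \<Rightarrow> real) \<Rightarrow> (nat \<Rightarrow> real) \<Rightarrow> nat
    \<Rightarrow> (nat \<Rightarrow> real) \<Rightarrow> real" where
  "PupM n \<phi>hat \<phi>tl \<xi>lo M x =
     (MAX m \<in> {..<M}. 4 * wsum n (\<lambda>_. 1) \<xi>lo x /
        ((wsum n (\<lambda>_. 1) \<xi>lo x)\<^sup>2 - (wsum n (gvec \<phi>hat \<phi>tl M m) \<xi>lo x)\<^sup>2))"

end

theory Submission
  imports Defs
begin

text \<open>Since \<open>u(\<phi>) u(\<phi>)\<^sup>T = (I + [cos 2\<phi>, sin 2\<phi>; sin 2\<phi>, -cos 2\<phi>]) / 2\<close>, the EFIM with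
  weights \<open>w\<^sub>j = x\<^sub>j \<xi>\<^sub>j\<close> has trace \<open>S = \<Sum> w\<^sub>j\<close> and eigenvalues \<open>(S \<plusminus> |Z|) / 2\<close>, where
  \<open>Z = \<Sum> w\<^sub>j exp (2 i \<phi>\<^sub>j)\<close> (\<open>phasor\<close> below); so the trace of its inverse is \<open>2/(S + |Z|) + 2/(S - |Z|)\<close>.
  Raising \<open>\<xi>\<^sub>j\<close> by \<open>\<delta>\<close> raises \<open>S\<close> by \<open>x\<^sub>j \<delta>\<close> and moves \<open>|Z|\<close> by at most that much, so both
  denominators grow: the worst case is \<open>\<xi> = \<xi>lo\<close>, and \<open>P\<^sub>R\<close> is governed by the largest \<open>|Z|\<close>
  over the box of angles. Now \<open>h\<^sub>m\<^sup>T R x\<close> is the maximum over the box of \<open>Re (Z exp (-i \<theta>\<^sub>m))\<close>, which is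
  at most \<open>|Z|\<close>: this gives the lower bound. Conversely the direction of any \<open>Z\<close> lies within
  \<open>\<pi>/M\<close> of some \<open>\<theta>\<^sub>m\<close>, so \<open>|Z| cos(\<pi>/M) \<le> h\<^sub>m\<^sup>T R x\<close>, i.e. \<open>|Z| \<le> g\<^sub>m\<^sup>T R x\<close>; the condition
  \<open>M \<ge> \<pi> \<surd>B\<close> guarantees \<open>g\<^sub>m\<^sup>T R x < 1\<^sup>T R x\<close>, so the upper bound is finite and dominates.\<close>

lemma matrix_inv_unique:
  fixes A C :: "'a::comm_semiring_1^'n^'n"
  assumes "A ** C = mat 1" and "C ** A = mat 1"
  shows "matrix_inv A = C"
proof -
  define B where "B = matrix_inv A"
  have B: "A ** B = mat 1 \<and> B ** A = mat 1"
    unfolding B_def matrix_inv_def by (rule someI) (use assms in blast)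
  have "B = B ** (A ** C)" using assms(1) by (simp add: matrix_mul_rid)
  also have "\<dots> = C" using B by (simp add: matrix_mul_assoc matrix_mul_lid)
  finally show ?thesis unfolding B_def .
qed

lemma trace_matrix_inv_2:
  fixes A :: "real^2^2"
  assumes "det A \<noteq> 0"
  shows "trace (matrix_inv A) = (A$1$1 + A$2$2) / det A"
proof -
  define C :: "real^2^2" where
    "C = (\<chi> i k. (if i = 1 \<and> k = 1 then A$2$2 else if i = 2 \<and> k = 2 then A$1$1
                   else if i = 1 then - A$1$2 else - A$2$1) / det A)"
  have det: "det A = A$1$1 * A$2$2 - A$1$2 * A$2$1" by (rule det_2)
  have "A ** C = mat 1 \<and> C ** A = mat 1"
    unfolding C_def
    by (simp add: vec_eq_iff forall_2 matrix_matrix_mult_def sum_2 mat_def diff_divide_distrib[symmetric],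
        simp add: assms det[symmetric] mult.commute[of "A $ 2 $ 2"] mult.commute[of "A $ 2 $ 1"])
  then have "matrix_inv A = C" by (blast intro: matrix_inv_unique)
  then show ?thesis unfolding C_def trace_def sum_2 by (simp add: add_divide_distrib)
qed

definition phasor :: "nat \<Rightarrow> (nat \<Rightarrow> real) \<Rightarrow> (nat \<Rightarrow> real) \<Rightarrow> complex" where
  "phasor n w \<phi> = (\<Sum>j<n. of_real (w j) * cis (2 * \<phi> j))"

lemma Re_phasor_cis:
  "Re (phasor n w \<phi> * cis (- \<theta>)) = (\<Sum>j<n. w j * cos (2 * \<phi> j - \<theta>))"
proof -
  have "phasor n w \<phi> * cis (- \<theta>) = (\<Sum>j<n. of_real (w j) * cis (2 * \<phi> j - \<theta>))"
    unfolding phasor_def sum_distrib_right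
    by (rule sum.cong) (simp_all add: mult.assoc cis_mult)
  then show ?thesis unfolding Re_sum by simp
qed

lemma Im_phasor: "Im (phasor n w \<phi>) = (\<Sum>j<n. w j * sin (2 * \<phi> j))"
  unfolding phasor_def Im_sum by simp

lemma norm_phasor_le:
  assumes "\<forall>j<n. 0 \<le> w j"
  shows "cmod (phasor n w \<phi>) \<le> (\<Sum>j<n. w j)"
proof -
  have "cmod (phasor n w \<phi>) \<le> (\<Sum>j<n. cmod (of_real (w j) * cis (2 * \<phi> j)))"
    unfolding phasor_def by (rule norm_sum)
  also have "\<dots> = (\<Sum>j<n. w j)"
    by (rule sum.cong) (use assms in \<open>simp_all add: norm_mult\<close>)
  finally show ?thesis .
qed

lemma phasor_diff: "phasor n w \<phi> - phasor n v \<phi> = phasor n (\<lambda>j. w j - v j) \<phi>"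
  unfolding phasor_def sum_subtractf[symmetric]
  by (rule sum.cong) (simp_all add: algebra_simps)

lemma EFIM_entry:
  "EFIM n x \<xi> \<phi> $ i $ k = (\<Sum>j<n. x j * \<xi> j * (uvec (\<phi> j) $ i * uvec (\<phi> j) $ k))"
  unfolding EFIM_def uuT_def by simp

lemma uvec_nth: "uvec \<phi> $ 1 = cos \<phi>" "uvec \<phi> $ 2 = sin \<phi>"
  unfolding uvec_def by simp_all

lemma trace_EFIM: "EFIM n x \<xi> \<phi> $ 1 $ 1 + EFIM n x \<xi> \<phi> $ 2 $ 2 = (\<Sum>j<n. x j * \<xi> j)"
  unfolding EFIM_entry uvec_nth sum.distrib[symmetric]
  by (rule sum.cong) (simp_all add: distrib_left[symmetric] sin_cos_squared_add3)

lemma det_EFIM: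
  "det (EFIM n x \<xi> \<phi>) =
     ((\<Sum>j<n. x j * \<xi> j)\<^sup>2 - (cmod (phasor n (\<lambda>j. x j * \<xi> j) \<phi>))\<^sup>2) / 4"
proof -
  define a where "a = (\<Sum>j<n. x j * \<xi> j * (cos (\<phi> j))\<^sup>2)"
  define d where "d = (\<Sum>j<n. x j * \<xi> j * (sin (\<phi> j))\<^sup>2)"
  define b where "b = (\<Sum>j<n. x j * \<xi> j * (cos (\<phi> j) * sin (\<phi> j)))"
  have entries: "EFIM n x \<xi> \<phi> $ 1 $ 1 = a" "EFIM n x \<xi> \<phi> $ 2 $ 2 = d"
      "EFIM n x \<xi> \<phi> $ 1 $ 2 = b" "EFIM n x \<xi> \<phi> $ 2 $ 1 = b"
    unfolding EFIM_entry uvec_nth a_def b_def d_def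
    by (simp_all add: power2_eq_square mult.commute)
  have tr: "(\<Sum>j<n. x j * \<xi> j) = a + d"
    using trace_EFIM[of n x \<xi> \<phi>] entries by simp
  have re: "Re (phasor n (\<lambda>j. x j * \<xi> j) \<phi>) = a - d"
    using Re_phasor_cis[of n _ \<phi> 0] unfolding a_def d_def sum_subtractf[symmetric]
    by (simp add: cos_double right_diff_distrib)
  have im: "Im (phasor n (\<lambda>j. x j * \<xi> j) \<phi>) = 2 * b"
    unfolding Im_phasor b_def sum_distrib_left
    by (rule sum.cong) (simp_all only: sin_double, simp add: mult_ac)
  show ?thesis
    unfolding det_2 entries cmod_power2 tr re im by (simp add: power2_eq_square algebra_simps)
qed

text \<open>The trace of the inverse of a symmetric \<open>2 \<times> 2\<close> matrix with eigenvalues \<open>(S \<plusminus> R) / 2\<close>.\<close>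

definition inv_trace :: "real \<Rightarrow> real \<Rightarrow> real" where
  "inv_trace S R = 4 * S / (S\<^sup>2 - R\<^sup>2)"

lemma trinv_EFIM:
  "trinv (EFIM n x \<xi> \<phi>) =
     (if (\<Sum>j<n. x j * \<xi> j)\<^sup>2 = (cmod (phasor n (\<lambda>j. x j * \<xi> j) \<phi>))\<^sup>2 then \<infinity>
      else ereal (inv_trace (\<Sum>j<n. x j * \<xi> j) (cmod (phasor n (\<lambda>j. x j * \<xi> j) \<phi>))))"
  using trace_matrix_inv_2[of "EFIM n x \<xi> \<phi>"] invertible_det_nz[of "EFIM n x \<xi> \<phi>"]
  unfolding trinv_def inv_trace_def det_EFIM trace_EFIM by auto

lemma inv_trace_partial_fractions:
  assumes "R < S" and "- R < S"
  shows "inv_trace S R = 2 / (S + R) + 2 / (S - R)"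
  using assms unfolding inv_trace_def by (simp add: field_simps power2_eq_square)

lemma inv_trace_antimono:
  assumes "0 \<le> R" and "0 \<le> R'" and "R' < S'"
    and "S' + R' \<le> S + R" and "S' - R' \<le> S - R"
  shows "inv_trace S R \<le> inv_trace S' R'"
proof -
  have "2 / (S + R) \<le> 2 / (S' + R')" "2 / (S - R) \<le> 2 / (S' - R')"
    using assms by (auto intro!: divide_left_mono)
  then show ?thesis
    using assms by (simp add: inv_trace_partial_fractions)
qed

lemma inv_trace_mono_radius:
  assumes "\<bar>F\<bar> \<le> R" and "R < S"
  shows "inv_trace S F \<le> inv_trace S R"
proof -
  have "F\<^sup>2 \<le> R\<^sup>2"
    using power_mono[OF assms(1) abs_ge_zero, of 2] by simp
  moreover have "R\<^sup>2 < S\<^sup>2"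
    using assms by (auto intro!: power_strict_mono)
  ultimately show ?thesis
    using assms unfolding inv_trace_def by (auto intro!: divide_left_mono)
qed

lemma cos_ge_one_minus_half_square: "1 - a\<^sup>2 / 2 \<le> cos (a::real)"
proof -
  have "(sin (a / 2))\<^sup>2 \<le> (a / 2)\<^sup>2"
    using power_mono[OF abs_sin_x_le_abs_x abs_ge_zero, of "a / 2" 2] by (simp add: power_divide)
  moreover have "cos a = 1 - 2 * (sin (a / 2))\<^sup>2"
    using cos_double_sin[of "a / 2"] by simp
  ultimately show ?thesis by (simp add: power_divide)
qed

text \<open>From \<open>inv_trace S \<rho> \<le> p\<close> we get \<open>S\<^sup>2 - \<rho>\<^sup>2 \<ge> 4 S / p \<ge> a\<^sup>2 S\<^sup>2\<close>, a gap between \<open>\<rho>\<close> and \<open>S\<close>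
  larger than the loss \<open>1 - cos a \<le> a\<^sup>2/2\<close>.\<close>

lemma radius_lt_cos_mesh:
  assumes "0 \<le> \<rho>" and "\<rho> < S" and "inv_trace S \<rho> \<le> p" and "a\<^sup>2 * p * S \<le> 4"
  shows "\<rho> < S * cos a"
proof -
  have S: "S > 0" and gap: "S\<^sup>2 - \<rho>\<^sup>2 > 0"
    using assms(1,2) by (auto intro!: power_strict_mono)
  have "4 * (a\<^sup>2 * S\<^sup>2 / (S\<^sup>2 - \<rho>\<^sup>2)) = a\<^sup>2 * inv_trace S \<rho> * S"
    unfolding inv_trace_def by (simp add: power2_eq_square)
  also have "\<dots> \<le> a\<^sup>2 * p * S"
    using assms(3) S by (intro mult_right_mono mult_left_mono) auto
  also have "\<dots> \<le> 4"
    by (rule assms(4))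
  finally have "a\<^sup>2 * S\<^sup>2 \<le> S\<^sup>2 - \<rho>\<^sup>2"
    using gap by (simp add: pos_divide_le_eq)
  then have "a\<^sup>2 * S * S \<le> (S - \<rho>) * (S + \<rho>)"
    by (simp add: power2_eq_square algebra_simps)
  also have "\<dots> < (S - \<rho>) * (2 * S)"
    using assms(1,2) by (intro mult_strict_left_mono) auto
  finally have "a\<^sup>2 * S < 2 * (S - \<rho>)"
    using S by (simp add: mult.assoc)
  then have "\<rho> < S * (1 - a\<^sup>2 / 2)"
    by (simp add: algebra_simps)
  also have "\<dots> \<le> S * cos a"
    using S cos_ge_one_minus_half_square by (intro mult_left_mono) auto
  finally show ?thesis .
qed

lemma cos_pi_div_le_cos_vartheta:
  assumes "M \<ge> 1"
  shows "\<exists>m<M. cos (pi / real M) \<le> cos (\<theta> - vartheta M m)"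
proof -
  have M: "real M > 0" using assms by simp
  define t where "t = (\<theta> * real M / pi - 1) / 2"
  define q where "q = round t"
  define m where "m = nat (q mod int M)"
  define k where "k = q div int M"
  have "0 \<le> q mod int M" "q mod int M < int M"
    using M by simp_all
  then have "m < M" and "int m = q mod int M"
    unfolding m_def by auto
  then have "q = int m + int M * k"
    unfolding k_def by simp
  then have q: "real_of_int q = real m + real M * real_of_int k"
    by (metis of_int_add of_int_mult of_int_of_nat_eq)
  define u where "u = t - of_int q"
  have "2 * pi * of_int (- k) + (\<theta> - vartheta M m) = 2 * u * (pi / real M)"
    unfolding vartheta_def u_def t_def q using M by (simp add: field_simps)
  moreover have "\<bar>u\<bar> \<le> 1 / 2"
    using of_int_round_abs_le[of t] unfolding u_def q_def by (simp add: abs_minus_commute)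
  then have "\<bar>2 * u * (pi / real M)\<bar> \<le> pi / real M"
    using M mult_right_mono[of "2 * \<bar>u\<bar>" 1 "pi / real M"] by (simp add: abs_mult)
  ultimately have "\<bar>2 * pi * of_int (- k) + (\<theta> - vartheta M m)\<bar> \<le> pi / real M"
    by simp
  moreover have "pi / real M \<le> pi"
    using assms by (simp add: divide_le_eq)
  ultimately show ?thesis
    using cos_monotone_aux \<open>m < M\<close> by blast
qed

definition angle_box :: "nat \<Rightarrow> (nat \<Rightarrow> real) \<Rightarrow> (nat \<Rightarrow> real) \<Rightarrow> (nat \<Rightarrow> real) set" where
  "angle_box n \<phi>hat \<phi>tl = {\<phi>. \<forall>j<n. \<phi> j \<in> {\<phi>hat j - \<phi>tl j .. \<phi>hat j + \<phi>tl j}}"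

lemma cos_le_hvec:
  assumes "\<phi> \<in> {\<phi>hat j - \<phi>tl j .. \<phi>hat j + \<phi>tl j}"
  shows "cos (2 * \<phi> - vartheta M m) \<le> hvec \<phi>hat \<phi>tl M m j"
proof -
  let ?f = "\<lambda>e. cos (2 * \<phi>hat j - vartheta M m + e)"
  have "?f (2 * \<phi> - 2 * \<phi>hat j) \<in> ?f ` {-2 * \<phi>tl j .. 2 * \<phi>tl j}"
    using assms by (intro imageI) auto
  then have "?f (2 * \<phi> - 2 * \<phi>hat j) \<le> Sup (?f ` {-2 * \<phi>tl j .. 2 * \<phi>tl j})"
    by (rule cSup_upper) (auto intro: bdd_aboveI[of _ 1])
  then show ?thesis unfolding hvec_def by (simp add: algebra_simps)
qed

lemma hvec_attained:
  assumes "\<phi>tl j \<ge> 0"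
  obtains \<phi> where "\<phi> \<in> {\<phi>hat j - \<phi>tl j .. \<phi>hat j + \<phi>tl j}"
    and "hvec \<phi>hat \<phi>tl M m j = cos (2 * \<phi> - vartheta M m)"
proof -
  let ?f = "\<lambda>e. cos (2 * \<phi>hat j - vartheta M m + e)"
  let ?I = "{-2 * \<phi>tl j .. 2 * \<phi>tl j}"
  have "\<exists>e\<in>?I. \<forall>e'\<in>?I. ?f e' \<le> ?f e"
    by (rule continuous_attains_sup) (use assms in \<open>auto intro!: continuous_intros\<close>)
  then obtain e where e: "e \<in> ?I" "\<forall>e'\<in>?I. ?f e' \<le> ?f e"
    by blast
  then have "hvec \<phi>hat \<phi>tl M m j = ?f e"
    unfolding hvec_def by (intro cSup_eq_maximum) auto
  with e(1) show ?thesis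
    by (intro that[of "\<phi>hat j + e / 2"]) (auto simp: algebra_simps)
qed

lemma wsum_eq_Re_phasor:
  assumes "\<forall>j<n. v j = cos (2 * \<phi> j - \<theta>)"
  shows "wsum n v \<xi>lo x = Re (phasor n (\<lambda>j. x j * \<xi>lo j) \<phi> * cis (- \<theta>))"
  unfolding wsum_def Re_phasor_cis by (rule sum.cong) (use assms in simp_all)

lemma wsum_hvec_attained:
  assumes "\<forall>j<n. \<phi>tl j \<ge> 0"
  obtains \<phi> where "\<phi> \<in> angle_box n \<phi>hat \<phi>tl"
    and "wsum n (hvec \<phi>hat \<phi>tl M m) \<xi>lo x
           = Re (phasor n (\<lambda>j. x j * \<xi>lo j) \<phi> * cis (- vartheta M m))"
proof -
  have "\<forall>j. \<exists>\<phi>. j < n \<longrightarrow> \<phi> \<in> {\<phi>hat j - \<phi>tl j .. \<phi>hat j + \<phi>tl j}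
          \<and> hvec \<phi>hat \<phi>tl M m j = cos (2 * \<phi> - vartheta M m)"
    using hvec_attained assms by metis
  then obtain \<phi> where "\<forall>j<n. \<phi> j \<in> {\<phi>hat j - \<phi>tl j .. \<phi>hat j + \<phi>tl j}
          \<and> hvec \<phi>hat \<phi>tl M m j = cos (2 * \<phi> j - vartheta M m)"
    by metis
  then show ?thesis
    by (intro that[of \<phi>] wsum_eq_Re_phasor) (auto simp: angle_box_def)
qed

lemma Re_phasor_le_wsum_hvec:
  assumes "\<phi> \<in> angle_box n \<phi>hat \<phi>tl" and "\<forall>j<n. 0 \<le> x j * \<xi>lo j"
  shows "Re (phasor n (\<lambda>j. x j * \<xi>lo j) \<phi> * cis (- vartheta M m))
           \<le> wsum n (hvec \<phi>hat \<phi>tl M m) \<xi>lo x"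
  unfolding wsum_def Re_phasor_cis
proof (rule sum_mono)
  fix j assume "j \<in> {..<n}"
  then have "cos (2 * \<phi> j - vartheta M m) \<le> hvec \<phi>hat \<phi>tl M m j" "0 \<le> x j * \<xi>lo j"
    using assms cos_le_hvec unfolding angle_box_def by auto
  then show "x j * \<xi>lo j * cos (2 * \<phi> j - vartheta M m) \<le> hvec \<phi>hat \<phi>tl M m j * \<xi>lo j * x j"
    using mult_left_mono by (metis mult.commute mult.left_commute)
qed

lemma wsum_gvec:
  "wsum n (gvec \<phi>hat \<phi>tl M m) \<xi>lo x = wsum n (hvec \<phi>hat \<phi>tl M m) \<xi>lo x / cos (pi / real M)"
  unfolding wsum_def gvec_def sum_divide_distrib by (rule sum.cong) simp_all

lemma wsum_const_one: "wsum n (\<lambda>_. 1) \<xi>lo x = (\<Sum>j<n. x j * \<xi>lo j)"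
  unfolding wsum_def by (simp add: mult.commute)

lemma exists_vartheta_Re_ge:
  assumes "M \<ge> 1"
  obtains m where "m < M" and "cmod z * cos (pi / real M) \<le> Re (z * cis (- vartheta M m))"
proof -
  obtain m where m: "m < M" "cos (pi / real M) \<le> cos (Arg z - vartheta M m)"
    using cos_pi_div_le_cos_vartheta[OF assms] by blast
  have "z * cis (- vartheta M m) = complex_of_real (cmod z) * cis (Arg z - vartheta M m)"
    by (subst (1) rcis_cmod_Arg[symmetric]) (simp add: rcis_def mult.assoc cis_mult)
  then have "Re (z * cis (- vartheta M m)) = cmod z * cos (Arg z - vartheta M m)"
    by simp
  with m show ?thesis
    by (intro that[of m]) (auto intro: mult_left_mono)
qed

lemma PlowM_eq_Max_inv_trace:
  "PlowM n \<phi>hat \<phi>tl \<xi>lo M x =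
     (MAX m \<in> {..<M}. inv_trace (\<Sum>j<n. x j * \<xi>lo j) (wsum n (hvec \<phi>hat \<phi>tl M m) \<xi>lo x))"
  unfolding PlowM_def inv_trace_def wsum_const_one ..

lemma PupM_eq_Max_inv_trace:
  "PupM n \<phi>hat \<phi>tl \<xi>lo M x =
     (MAX m \<in> {..<M}. inv_trace (\<Sum>j<n. x j * \<xi>lo j) (wsum n (gvec \<phi>hat \<phi>tl M m) \<xi>lo x))"
  unfolding PupM_def inv_trace_def wsum_const_one ..

locale uncertainty_cell =
  fixes n :: nat and \<phi>hat \<phi>tl \<xi>lo \<xi>hi x :: "nat \<Rightarrow> real"
  assumes \<phi>tl_nonneg: "\<forall>j<n. \<phi>tl j \<ge> 0"
    and \<xi>_bounds: "\<forall>j<n. 0 \<le> \<xi>lo j \<and> \<xi>lo j \<le> \<xi>hi j"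
    and x_nonneg: "\<forall>j<n. x j \<ge> 0"
    and PR_finite: "PR n \<phi>hat \<phi>tl \<xi>lo \<xi>hi x < \<infinity>"
begin

definition cell :: "((nat \<Rightarrow> real) \<times> (nat \<Rightarrow> real)) set" where
  "cell = {(\<phi>, \<xi>). \<phi> \<in> angle_box n \<phi>hat \<phi>tl \<and> (\<forall>j<n. \<xi> j \<in> {\<xi>lo j .. \<xi>hi j})}"

abbreviation W :: real where
  "W \<equiv> \<Sum>j<n. x j * \<xi>lo j"

abbreviation Zlo :: "(nat \<Rightarrow> real) \<Rightarrow> complex" where
  "Zlo \<phi> \<equiv> phasor n (\<lambda>j. x j * \<xi>lo j) \<phi>"

abbreviation P :: real where
  "P \<equiv> real_of_ereal (PR n \<phi>hat \<phi>tl \<xi>lo \<xi>hi x)"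

lemma PR_eq_SUP_cell: "PR n \<phi>hat \<phi>tl \<xi>lo \<xi>hi x = (SUP (\<phi>, \<xi>) \<in> cell. trinv (EFIM n x \<xi> \<phi>))"
proof -
  have "cell = {(\<phi>, \<xi>). \<forall>j<n. \<phi> j \<in> {\<phi>hat j - \<phi>tl j .. \<phi>hat j + \<phi>tl j}
                              \<and> \<xi> j \<in> {\<xi>lo j .. \<xi>hi j}}"
    unfolding cell_def angle_box_def by auto
  then show ?thesis unfolding PR_def by simp
qed

lemma trinv_le_PR: "(\<phi>, \<xi>) \<in> cell \<Longrightarrow> trinv (EFIM n x \<xi> \<phi>) \<le> PR n \<phi>hat \<phi>tl \<xi>lo \<xi>hi x"
  unfolding PR_eq_SUP_cell by (force intro: SUP_upper2)

lemma trinv_on_cell: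
  assumes "(\<phi>, \<xi>) \<in> cell"
  shows "cmod (phasor n (\<lambda>j. x j * \<xi> j) \<phi>) < (\<Sum>j<n. x j * \<xi> j)"
    and "trinv (EFIM n x \<xi> \<phi>) =
           ereal (inv_trace (\<Sum>j<n. x j * \<xi> j) (cmod (phasor n (\<lambda>j. x j * \<xi> j) \<phi>)))"
proof -
  have "\<forall>j<n. 0 \<le> x j * \<xi> j"
    using assms \<xi>_bounds x_nonneg unfolding cell_def by clarsimp (meson mult_nonneg_nonneg order_trans)
  then have le: "cmod (phasor n (\<lambda>j. x j * \<xi> j) \<phi>) \<le> (\<Sum>j<n. x j * \<xi> j)"
    by (rule norm_phasor_le)
  have "trinv (EFIM n x \<xi> \<phi>) \<noteq> \<infinity>"
    using trinv_le_PR[OF assms] PR_finite by auto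
  then have ne: "(\<Sum>j<n. x j * \<xi> j)\<^sup>2 \<noteq> (cmod (phasor n (\<lambda>j. x j * \<xi> j) \<phi>))\<^sup>2"
    unfolding trinv_EFIM by auto
  with le show "cmod (phasor n (\<lambda>j. x j * \<xi> j) \<phi>) < (\<Sum>j<n. x j * \<xi> j)"
    by (metis order_less_le)
  from ne show "trinv (EFIM n x \<xi> \<phi>) =
      ereal (inv_trace (\<Sum>j<n. x j * \<xi> j) (cmod (phasor n (\<lambda>j. x j * \<xi> j) \<phi>)))"
    unfolding trinv_EFIM by simp
qed

lemma lower_coefficients_in_cell: "\<phi> \<in> angle_box n \<phi>hat \<phi>tl \<Longrightarrow> (\<phi>, \<xi>lo) \<in> cell"
  using \<xi>_bounds unfolding cell_def by auto

lemma center_in_angle_box: "\<phi>hat \<in> angle_box n \<phi>hat \<phi>tl"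
  using \<phi>tl_nonneg unfolding angle_box_def by auto

lemma PR_eq_ereal: "PR n \<phi>hat \<phi>tl \<xi>lo \<xi>hi x = ereal P"
proof -
  have "(\<phi>hat, \<xi>lo) \<in> cell"
    using center_in_angle_box by (rule lower_coefficients_in_cell)
  then have "PR n \<phi>hat \<phi>tl \<xi>lo \<xi>hi x \<noteq> -\<infinity>"
    using trinv_le_PR trinv_on_cell(2) by force
  then show ?thesis
    using PR_finite by (cases "PR n \<phi>hat \<phi>tl \<xi>lo \<xi>hi x") auto
qed

lemma lower_phasor_bound:
  assumes "\<phi> \<in> angle_box n \<phi>hat \<phi>tl"
  shows "cmod (Zlo \<phi>) < W" and "inv_trace W (cmod (Zlo \<phi>)) \<le> P"
proof -
  have cell: "(\<phi>, \<xi>lo) \<in> cell"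
    using assms by (rule lower_coefficients_in_cell)
  show "cmod (Zlo \<phi>) < W"
    using trinv_on_cell(1)[OF cell] .
  have "ereal (inv_trace W (cmod (Zlo \<phi>))) \<le> PR n \<phi>hat \<phi>tl \<xi>lo \<xi>hi x"
    using trinv_le_PR[OF cell] unfolding trinv_on_cell(2)[OF cell] .
  also have "\<dots> = ereal P"
    by (rule PR_eq_ereal)
  finally show "inv_trace W (cmod (Zlo \<phi>)) \<le> P"
    by simp
qed

lemma inv_trace_le_lower_coefficients:
  assumes "(\<phi>, \<xi>) \<in> cell"
  shows "inv_trace (\<Sum>j<n. x j * \<xi> j) (cmod (phasor n (\<lambda>j. x j * \<xi> j) \<phi>))
           \<le> inv_trace W (cmod (Zlo \<phi>))"
proof -
  let ?Z = "phasor n (\<lambda>j. x j * \<xi> j) \<phi>"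
  have \<phi>: "\<phi> \<in> angle_box n \<phi>hat \<phi>tl"
    using assms unfolding cell_def by auto
  have "\<forall>j<n. 0 \<le> x j * \<xi> j - x j * \<xi>lo j"
    using assms x_nonneg unfolding cell_def by (auto simp flip: right_diff_distrib)
  then have "cmod (phasor n (\<lambda>j. x j * \<xi> j - x j * \<xi>lo j) \<phi>) \<le> (\<Sum>j<n. x j * \<xi> j - x j * \<xi>lo j)"
    by (rule norm_phasor_le)
  then have diff: "cmod (?Z - Zlo \<phi>) \<le> (\<Sum>j<n. x j * \<xi> j) - W"
    by (simp only: phasor_diff sum_subtractf)
  have "cmod ?Z \<le> cmod (Zlo \<phi>) + cmod (?Z - Zlo \<phi>)"
    by (rule norm_triangle_sub)
  moreover have "cmod (Zlo \<phi>) \<le> cmod ?Z + cmod (?Z - Zlo \<phi>)"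
    using norm_triangle_sub[of "Zlo \<phi>" ?Z] by (simp add: norm_minus_commute)
  moreover have "cmod (Zlo \<phi>) < W"
    using \<phi> by (rule lower_phasor_bound(1))
  ultimately show ?thesis
    using diff by (intro inv_trace_antimono norm_ge_zero) linarith+
qed

lemma PlowM_le_PR:
  assumes "M \<ge> 1"
  shows "ereal (PlowM n \<phi>hat \<phi>tl \<xi>lo M x) \<le> PR n \<phi>hat \<phi>tl \<xi>lo \<xi>hi x"
proof -
  have "inv_trace W (wsum n (hvec \<phi>hat \<phi>tl M m) \<xi>lo x) \<le> P" for m
  proof -
    obtain \<phi> where \<phi>: "\<phi> \<in> angle_box n \<phi>hat \<phi>tl"
      and F: "wsum n (hvec \<phi>hat \<phi>tl M m) \<xi>lo x = Re (Zlo \<phi> * cis (- vartheta M m))"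
      using wsum_hvec_attained \<phi>tl_nonneg by blast
    have "\<bar>wsum n (hvec \<phi>hat \<phi>tl M m) \<xi>lo x\<bar> \<le> cmod (Zlo \<phi>)"
      unfolding F using abs_Re_le_cmod[of "Zlo \<phi> * cis (- vartheta M m)"] by (simp add: norm_mult)
    then have "inv_trace W (wsum n (hvec \<phi>hat \<phi>tl M m) \<xi>lo x) \<le> inv_trace W (cmod (Zlo \<phi>))"
      using lower_phasor_bound(1)[OF \<phi>] by (rule inv_trace_mono_radius)
    also have "\<dots> \<le> P"
      using \<phi> by (rule lower_phasor_bound(2))
    finally show ?thesis .
  qed
  then have "PlowM n \<phi>hat \<phi>tl \<xi>lo M x \<le> P"
    unfolding PlowM_eq_Max_inv_trace using assms by (intro Max.boundedI) (auto simp: lessThan_empty_iff)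
  then show ?thesis
    by (subst PR_eq_ereal) simp
qed

lemma mesh_condition:
  assumes "M \<ge> 1" and "real M \<ge> pi * sqrt (Bfun n \<phi>hat \<phi>tl \<xi>lo \<xi>hi x)"
  shows "(pi / real M)\<^sup>2 * P * W \<le> 4"
proof (cases "P * W \<ge> 0")
  case True
  have B: "Bfun n \<phi>hat \<phi>tl \<xi>lo \<xi>hi x = P * W / 4"
    unfolding Bfun_def wsum_const_one by simp
  have "(pi * sqrt (P * W / 4))\<^sup>2 \<le> (real M)\<^sup>2"
    using assms(2)[unfolded B] True by (intro power_mono) simp_all
  then have "pi\<^sup>2 * (P * W) \<le> 4 * (real M)\<^sup>2"
    using True by (simp add: power_mult_distrib)
  then show ?thesis
    using assms(1) by (simp add: power_divide pos_divide_le_eq mult.assoc)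
next
  case False
  then have "P * W \<le> 0"
    by simp
  then have "(pi / real M)\<^sup>2 * (P * W) \<le> 0"
    by (rule mult_nonneg_nonpos[OF zero_le_power2])
  then show ?thesis
    by (simp add: mult.assoc)
qed

lemma lower_phasor_le_gvec:
  assumes "M \<ge> 1" and "real M \<ge> pi * sqrt (Bfun n \<phi>hat \<phi>tl \<xi>lo \<xi>hi x)"
    and \<phi>: "\<phi> \<in> angle_box n \<phi>hat \<phi>tl"
  obtains m where "m < M" and "cmod (Zlo \<phi>) \<le> wsum n (gvec \<phi>hat \<phi>tl M m) \<xi>lo x"
    and "wsum n (gvec \<phi>hat \<phi>tl M m) \<xi>lo x < W"
proof -
  obtain m where "m < M" and m: "cmod (Zlo \<phi>) * cos (pi / real M) \<le> Re (Zlo \<phi> * cis (- vartheta M m))"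
    using exists_vartheta_Re_ge[OF assms(1)] by blast
  let ?F = "wsum n (hvec \<phi>hat \<phi>tl M m) \<xi>lo x"
  obtain \<phi>' where \<phi>': "\<phi>' \<in> angle_box n \<phi>hat \<phi>tl"
    and F: "?F = Re (Zlo \<phi>' * cis (- vartheta M m))"
    using wsum_hvec_attained \<phi>tl_nonneg by blast
  have "?F \<le> cmod (Zlo \<phi>')"
    unfolding F using complex_Re_le_cmod[of "Zlo \<phi>' * cis (- vartheta M m)"] by (simp add: norm_mult)
  also have "cmod (Zlo \<phi>') < W * cos (pi / real M)"
    using lower_phasor_bound[OF \<phi>'] mesh_condition[OF assms(1,2)] by (intro radius_lt_cos_mesh) auto
  finally have F_lt: "?F < W * cos (pi / real M)" .
  have "\<forall>j<n. 0 \<le> x j * \<xi>lo j"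
    using x_nonneg \<xi>_bounds by auto
  with m have F_ge: "cmod (Zlo \<phi>) * cos (pi / real M) \<le> ?F"
    using Re_phasor_le_wsum_hvec[OF \<phi>] order.trans by blast
  have "0 < W * cos (pi / real M)"
    using \<open>cmod (Zlo \<phi>') < _\<close> norm_ge_zero[of "Zlo \<phi>'"] by linarith
  moreover have "0 < W"
    using lower_phasor_bound(1)[OF \<phi>'] norm_ge_zero[of "Zlo \<phi>'"] by linarith
  ultimately have "0 < cos (pi / real M)"
    by (simp add: zero_less_mult_iff)
  then have "cmod (Zlo \<phi>) \<le> ?F / cos (pi / real M)" and "?F / cos (pi / real M) < W"
    using F_ge F_lt by (simp_all add: pos_le_divide_eq pos_divide_less_eq)
  with \<open>m < M\<close> show ?thesis
    by (intro that[of m]) (simp_all only: wsum_gvec)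
qed

lemma PR_le_PupM:
  assumes "M \<ge> 1" and "real M \<ge> pi * sqrt (Bfun n \<phi>hat \<phi>tl \<xi>lo \<xi>hi x)"
  shows "PR n \<phi>hat \<phi>tl \<xi>lo \<xi>hi x \<le> ereal (PupM n \<phi>hat \<phi>tl \<xi>lo M x)"
  unfolding PR_eq_SUP_cell
proof (rule SUP_least, clarify)
  fix \<phi> \<xi> assume cell: "(\<phi>, \<xi>) \<in> cell"
  then have "\<phi> \<in> angle_box n \<phi>hat \<phi>tl"
    unfolding cell_def by auto
  then obtain m where "m < M" and m: "cmod (Zlo \<phi>) \<le> wsum n (gvec \<phi>hat \<phi>tl M m) \<xi>lo x"
      "wsum n (gvec \<phi>hat \<phi>tl M m) \<xi>lo x < W"
    using lower_phasor_le_gvec[OF assms] by blast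
  have "trinv (EFIM n x \<xi> \<phi>)
          = ereal (inv_trace (\<Sum>j<n. x j * \<xi> j) (cmod (phasor n (\<lambda>j. x j * \<xi> j) \<phi>)))"
    using cell by (rule trinv_on_cell(2))
  also have "\<dots> \<le> ereal (inv_trace W (cmod (Zlo \<phi>)))"
    using inv_trace_le_lower_coefficients[OF cell] by simp
  also have "\<dots> \<le> ereal (inv_trace W (wsum n (gvec \<phi>hat \<phi>tl M m) \<xi>lo x))"
    using m by (simp add: inv_trace_mono_radius)
  also have "\<dots> \<le> ereal (PupM n \<phi>hat \<phi>tl \<xi>lo M x)"
    unfolding PupM_eq_Max_inv_trace using \<open>m < M\<close> by simp
  finally show "trinv (EFIM n x \<xi> \<phi>) \<le> ereal (PupM n \<phi>hat \<phi>tl \<xi>lo M x)" .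
qed

end

theorem proposition4:
  fixes n M :: nat and \<phi>hat \<phi>tl \<xi>lo \<xi>hi x :: "nat \<Rightarrow> real"
  assumes "n \<ge> 1"
    and "\<forall>j<n. \<phi>tl j \<ge> 0"
    and "\<forall>j<n. 0 \<le> \<xi>lo j \<and> \<xi>lo j \<le> \<xi>hi j"
    and "\<forall>j<n. x j \<ge> 0"
    and "PR n \<phi>hat \<phi>tl \<xi>lo \<xi>hi x < \<infinity>"
    and "M \<ge> 1"
    and "real M \<ge> pi * sqrt (Bfun n \<phi>hat \<phi>tl \<xi>lo \<xi>hi x)"
  shows "ereal (PlowM n \<phi>hat \<phi>tl \<xi>lo M x) \<le> PR n \<phi>hat \<phi>tl \<xi>lo \<xi>hi x
       \<and> PR n \<phi>hat \<phi>tl \<xi>lo \<xi>hi x \<le> ereal (PupM n \<phi>hat \<phi>tl \<xi>lo M x)"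
proof -
  interpret uncertainty_cell n \<phi>hat \<phi>tl \<xi>lo \<xi>hi x
    using assms(2-5) by unfold_locales
  show ?thesis
    using PlowM_le_PR[OF assms(6)] PR_le_PupM[OF assms(6,7)] by blast
qed

end
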